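(* Let $M=M(S^2;\frac{q_1}{p_1},\frac{q_2}{p_2},\frac{q_3}{p_3})$ with $e(M)\neq0$. Then $$|X^{irr}(M)|=p_1^+p_2^+p_3^++p_1^-p_2^-p_3^--x_M,$$ where $p_i^+=\lceil p_i/2\rceil-1$, $p_i^-=\lfloor p_i/2\rfloor$, and $x_M$ is the number of exceptional abelian characters of $M$.
   Context: $M(S^2;\frac{q_1}{p_1},\frac{q_2}{p_2},\frac{q_3}{p_3})$ ($(p_i,q_i)$ coprime, $p_i\ge1$) is the closed Seifert manifold obtained from $S_{0,3}\times S^1$ by gluing solid tori whose meridians are $p_ic_i+q_ih_i$; $e(M)=\sum_iq_i/p_i$; $\pi_1(M)=\langle c_1,c_2,c_3,h\mid [c_i,h]=1=c_i^{p_i}h^{q_i},\ c_1c_2c_3=1\rangle$. $X^{irr}(M)$ is the set of characters of irreducible representations $\pi_1(M)\to\mathrm{SL}_2(\mathbb{C})$. An abelian character is the trace of a diagonal representation; it is exceptional if it is the trace of a representation $\rho$ with $\rho(h)=\pm I$ and $\rho(c_i)\neq\pm I$ for $i=1,2,3$. *)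

theory Defs
  imports "HOL-Analysis.Analysis"
begin

type_synonym mat2 = "complex^2^2"

text \<open>Generators of pi_1(M) = < c1,c2,c3,h | [c_i,h]=1 = c_i^{p_i} h^{q_i}, c1 c2 c3 = 1 >.\<close>
datatype gen = C1 | C2 | C3 | H

fun cgen :: "nat \<Rightarrow> gen" where
  "cgen i = (if i = 1 then C1 else if i = 2 then C2 else C3)"

fun mpow_nat :: "mat2 \<Rightarrow> nat \<Rightarrow> mat2" where
  "mpow_nat A 0 = mat 1"
| "mpow_nat A (Suc n) = A ** mpow_nat A n"

definition mpow_int :: "mat2 \<Rightarrow> int \<Rightarrow> mat2" where
  "mpow_int A k = (if k \<ge> 0 then mpow_nat A (nat k) else mpow_nat (matrix_inv A) (nat (- k)))"

text \<open>A representation pi_1(M) -> SL_2(C), given by the images of the generators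
  satisfying the defining relations. Parameters p q are indexed by i in {1,2,3}.\<close>
definition is_rep :: "(nat \<Rightarrow> int) \<Rightarrow> (nat \<Rightarrow> int) \<Rightarrow> (gen \<Rightarrow> mat2) \<Rightarrow> bool" where
  "is_rep p q \<rho> \<longleftrightarrow>
     (\<forall>g. det (\<rho> g) = 1) \<and>
     (\<forall>i\<in>{1,2,3::nat}. \<rho> (cgen i) ** \<rho> H = \<rho> H ** \<rho> (cgen i)) \<and>
     (\<forall>i\<in>{1,2,3::nat}. mpow_int (\<rho> (cgen i)) (p i) ** mpow_int (\<rho> H) (q i) = mat 1) \<and>
     \<rho> C1 ** \<rho> C2 ** \<rho> C3 = mat 1"

text \<open>Words in the generators and their inverses (True = generator, False = inverse);
  they represent all elements of pi_1(M).\<close>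
type_synonym word = "(gen \<times> bool) list"

fun eval_word :: "(gen \<Rightarrow> mat2) \<Rightarrow> word \<Rightarrow> mat2" where
  "eval_word \<rho> [] = mat 1"
| "eval_word \<rho> ((g, b) # w) = (if b then \<rho> g else matrix_inv (\<rho> g)) ** eval_word \<rho> w"

definition character :: "(gen \<Rightarrow> mat2) \<Rightarrow> word \<Rightarrow> complex" where
  "character \<rho> = (\<lambda>w. trace (eval_word \<rho> w))"

text \<open>Irreducible: no common invariant line in C^2 (the image group is generated by the
  rho g, which are invertible).\<close>
definition irreducible_rep :: "(gen \<Rightarrow> mat2) \<Rightarrow> bool" where
  "irreducible_rep \<rho> \<longleftrightarrow>
     \<not> (\<exists>v::complex^2. v \<noteq> 0 \<and> (\<forall>g. \<exists>c. \<rho> g *v v = c *s v))"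

definition Xirr :: "(nat \<Rightarrow> int) \<Rightarrow> (nat \<Rightarrow> int) \<Rightarrow> (word \<Rightarrow> complex) set" where
  "Xirr p q = {character \<rho> | \<rho>. is_rep p q \<rho> \<and> irreducible_rep \<rho>}"

definition diagonal_mat :: "mat2 \<Rightarrow> bool" where
  "diagonal_mat A \<longleftrightarrow> A $ 1 $ 2 = 0 \<and> A $ 2 $ 1 = 0"

definition abelian_chars :: "(nat \<Rightarrow> int) \<Rightarrow> (nat \<Rightarrow> int) \<Rightarrow> (word \<Rightarrow> complex) set" where
  "abelian_chars p q = {character \<rho> | \<rho>. is_rep p q \<rho> \<and> (\<forall>g. diagonal_mat (\<rho> g))}"

definition exceptional_abelian_chars :: "(nat \<Rightarrow> int) \<Rightarrow> (nat \<Rightarrow> int) \<Rightarrow> (word \<Rightarrow> complex) set" where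
  "exceptional_abelian_chars p q =
     {ch \<in> abelian_chars p q. \<exists>\<rho>. is_rep p q \<rho> \<and> character \<rho> = ch \<and>
        (\<rho> H = mat 1 \<or> \<rho> H = - mat 1) \<and>
        (\<forall>i\<in>{1,2,3::nat}. \<rho> (cgen i) \<noteq> mat 1 \<and> \<rho> (cgen i) \<noteq> - mat 1)}"

end

theory Submission
  imports Defs
begin

text \<open>Since \<open>h\<close> is central, an irreducible \<open>\<rho>\<close> sends it to \<open>e = \<plusminus>1\<close>, and then
  \<open>\<rho>(c\<^sub>i)\<^bsup>p\<^sub>i\<^esup> = e\<^bsup>q\<^sub>i\<^esup>\<close>. A non-central \<open>A \<in> SL\<^sub>2(\<complex>)\<close> with \<open>A\<^sup>n = s = \<plusminus>1\<close> is
  diagonalizable with eigenvalues \<open>l, 1/l\<close>, \<open>l\<^sup>n = s\<close>, \<open>l\<^sup>2 \<noteq> 1\<close>, and conversely; there are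
  \<open>p\<^sup>+\<close> such traces \<open>l + 1/l\<close> for \<open>s = 1\<close> and \<open>p\<^sup>-\<close> for \<open>s = -1\<close> (for \<open>e = -1\<close>, \<open>q\<^sub>i\<close> even,
  coprimality makes \<open>p\<^sub>i\<close> odd, where \<open>p\<^sup>+ = p\<^sup>-\<close>). By Fricke's lemma a character with
  \<open>\<rho>(h) = e\<close> is determined by \<open>e\<close> and the traces \<open>x, y, z\<close> of \<open>\<rho>(c\<^sub>1), \<rho>(c\<^sub>2), \<rho>(c\<^sub>1 c\<^sub>2)\<close>, and
  every admissible such datum is realized. The representation is reducible iff
  \<open>x\<^sup>2 + y\<^sup>2 + z\<^sup>2 - x y z - 4 = 0\<close> (so irreducible ones have non-central \<open>\<rho>(c\<^sub>i)\<close>), in which case it has the character of a diagonal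
  representation with non-central \<open>\<rho>(c\<^sub>i)\<close>: an exceptional one. So the admissible data are
  split between \<open>X\<^sup>i\<^sup>r\<^sup>r(M)\<close> and the exceptional characters.\<close>

section \<open>Matrices in \<open>SL\<^sub>2(\<complex>)\<close>\<close>

declare cgen.simps [simp del]

lemma cgen_numeral [simp]: "cgen 1 = C1" "cgen (Suc 0) = C1" "cgen 2 = C2" "cgen 3 = C3"
  by (simp_all add: cgen.simps)

lemmas mat2_entrywise = vec_eq_iff forall_2 matrix_matrix_mult_def sum_2 mat_def
  matrix_vector_mult_def det_2 trace_def

definition mat2_of :: "complex \<Rightarrow> complex \<Rightarrow> complex \<Rightarrow> complex \<Rightarrow> mat2" where
  "mat2_of a b c d = (\<chi> i j. if i = 1 then (if j = 1 then a else b) else (if j = 1 then c else d))"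

lemma mat2_of_nth [simp]:
  "mat2_of a b c d $ 1 $ 1 = a" "mat2_of a b c d $ 1 $ 2 = b"
  "mat2_of a b c d $ 2 $ 1 = c" "mat2_of a b c d $ 2 $ 2 = d"
  by (simp_all add: mat2_of_def)

lemma mat_mult_mat: "mat a ** mat b = (mat (a * b) :: mat2)"
  by (simp add: mat2_entrywise)

lemma trace_mat2_mat [simp]: "trace (mat a :: mat2) = 2 * a"
  by (simp add: mat2_entrywise)

lemma det_mat2_mat [simp]: "det (mat a :: mat2) = a * a"
  by (simp add: mat2_entrywise)

lemma uminus_mat_one: "- mat 1 = (mat (-1) :: mat2)"
  by (simp add: mat2_entrywise)

lemma mat_vector_mult: "mat a *v v = a *s (v :: complex^2)"
  by (simp add: mat2_entrywise)

lemma matrix_vector_mult_smult: "(A :: mat2) *v (c *s v) = c *s (A *v v)"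
  by (simp add: mat2_entrywise algebra_simps)

lemma square_eq_1_iff_complex: "(l :: complex) * l = 1 \<longleftrightarrow> l = 1 \<or> l = -1"
  by (metis mult_cancel_left1 square_eq_1_iff)

definition adjugate2 :: "mat2 \<Rightarrow> mat2" where
  "adjugate2 A = mat (trace A) - A"

lemma adjugate2_inverse:
  assumes "det (A :: mat2) = 1"
  shows "A ** adjugate2 A = mat 1" "adjugate2 A ** A = mat 1"
  using assms by (simp_all add: mat2_entrywise adjugate2_def algebra_simps)

lemma adjugate2_mat [simp]: "adjugate2 (mat a) = mat a"
  by (simp add: mat2_entrywise adjugate2_def)

lemma trace_adjugate2 [simp]: "trace (adjugate2 A) = trace (A :: mat2)"
  by (simp add: mat2_entrywise adjugate2_def)

lemma trace_adjugate2_mult: "trace (adjugate2 B ** adjugate2 A) = trace ((A :: mat2) ** B)"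
  by (simp add: mat2_entrywise adjugate2_def algebra_simps)

lemma adjugate2_eigenvector:
  "A *v v = c *s v \<Longrightarrow> adjugate2 A *v v = (trace A - c) *s (v :: complex^2)"
  by (simp add: mat2_entrywise adjugate2_def algebra_simps)

lemma matrix_inv_eqI:
  assumes "(A :: mat2) ** B = mat 1" "B ** A = mat 1"
  shows "matrix_inv A = B"
proof -
  have "A ** matrix_inv A = mat 1 \<and> matrix_inv A ** A = mat 1"
    unfolding matrix_inv_def by (rule someI[of _ B]) (use assms in blast)
  then have "matrix_inv A = matrix_inv A ** (A ** B)"
    using assms by (simp add: matrix_mul_rid)
  also have "\<dots> = B"
    using \<open>_ \<and> _\<close> by (simp add: matrix_mul_assoc matrix_mul_lid)
  finally show ?thesis .
qed

lemma matrix_inv_sl2: "det (A :: mat2) = 1 \<Longrightarrow> matrix_inv A = adjugate2 A"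
  using adjugate2_inverse matrix_inv_eqI by blast

lemma eq_mat_if_mult_mat_eq_1:
  assumes "(X :: mat2) ** mat s = mat 1" "s * s = 1"
  shows "X = mat s"
proof -
  have "X = X ** (mat s ** mat s)"
    using assms(2) by (simp add: mat_mult_mat)
  also have "\<dots> = mat s"
    using assms(1) by (metis matrix_mul_assoc matrix_mul_lid)
  finally show ?thesis .
qed

lemma sl2_third_factor:
  assumes "det (A :: mat2) = 1" "det B = 1" "A ** B ** C = mat 1"
  shows "C = adjugate2 B ** adjugate2 A" "matrix_inv C = A ** B"
proof -
  have inv: "adjugate2 B ** adjugate2 A ** (A ** B) = mat 1"
    by (metis adjugate2_inverse assms(1,2) matrix_mul_assoc matrix_mul_lid)
  then have "C = adjugate2 B ** adjugate2 A ** (A ** B ** C)"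
    by (metis matrix_mul_assoc matrix_mul_lid)
  then show C: "C = adjugate2 B ** adjugate2 A"
    using assms(3) by (simp add: matrix_mul_rid)
  show "matrix_inv C = A ** B"
    using matrix_inv_eqI assms(3) inv unfolding C by (simp add: matrix_mul_assoc)
qed

lemma is_repD:
  assumes "is_rep p q \<rho>"
  shows "det (\<rho> g) = 1" "\<rho> C1 ** \<rho> C2 ** \<rho> C3 = mat 1"
    "i \<in> {1,2,3} \<Longrightarrow> \<rho> (cgen i) ** \<rho> H = \<rho> H ** \<rho> (cgen i)"
    "i \<in> {1,2,3} \<Longrightarrow> mpow_int (\<rho> (cgen i)) (p i) ** mpow_int (\<rho> H) (q i) = mat 1"
  using assms unfolding is_rep_def by auto

lemma is_rep_C3:
  assumes "is_rep p q \<rho>"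
  shows "\<rho> C3 = adjugate2 (\<rho> C2) ** adjugate2 (\<rho> C1)" "matrix_inv (\<rho> C3) = \<rho> C1 ** \<rho> C2"
  using sl2_third_factor is_repD(1,2)[OF assms] by blast+

lemma trace_is_rep_C3: "is_rep p q \<rho> \<Longrightarrow> trace (\<rho> C3) = trace (\<rho> C1 ** \<rho> C2)"
  using is_rep_C3(1) trace_adjugate2_mult by metis

section \<open>Fricke's lemma\<close>

text \<open>Multiplying by \<open>A\<close>, \<open>B\<close> or their inverses keeps a matrix in the span of \<open>1, A, B, A B\<close>
  and changes its coordinates by polynomials in \<open>trace A\<close>, \<open>trace B\<close>, \<open>trace (A B)\<close> only. Hence
  a word has the same coordinates for two pairs with equal traces, and so the same trace.\<close>
definition span_comb :: "mat2 \<Rightarrow> mat2 \<Rightarrow> complex \<Rightarrow> complex \<Rightarrow> complex \<Rightarrow> complex \<Rightarrow> mat2" where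
  "span_comb A B a b c d = mat a + mat b ** A + mat c ** B + mat d ** (A ** B)"

definition same_span_comb :: "mat2 \<Rightarrow> mat2 \<Rightarrow> mat2 \<Rightarrow> mat2 \<Rightarrow> mat2 \<Rightarrow> mat2 \<Rightarrow> bool" where
  "same_span_comb A B A' B' X X' \<longleftrightarrow>
     (\<exists>a b c d. X = span_comb A B a b c d \<and> X' = span_comb A' B' a b c d)"

lemma sl2_mult_span_comb_left:
  "det (A :: mat2) = 1 \<Longrightarrow>
    A ** span_comb A B a b c d = span_comb A B (- b) (a + b * trace A) (- d) (c + d * trace A)"
  unfolding span_comb_def by (simp add: mat2_entrywise algebra_simps; algebra)

lemma sl2_mult_span_comb_right:
  "det (B :: mat2) = 1 \<Longrightarrow>
    B ** span_comb A B a b c d =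
      span_comb A B (b * (trace (A ** B) - trace A * trace B) - c - d * trace A) (b * trace B + d)
        (a + b * trace A + c * trace B + d * trace (A ** B)) (- b)"
  unfolding span_comb_def by (simp add: mat2_entrywise algebra_simps; algebra)

lemma mat_mult_span_comb:
  "mat s ** span_comb A B a b c d = span_comb A B (s * a) (s * b) (s * c) (s * d)"
  unfolding span_comb_def by (simp add: mat2_entrywise algebra_simps)

lemma span_comb_diff:
  "span_comb A B a b c d - span_comb A B a' b' c' d' = span_comb A B (a - a') (b - b') (c - c') (d - d')"
  unfolding span_comb_def by (simp add: mat2_entrywise algebra_simps)

lemma trace_span_comb:
  "trace (span_comb A B a b c d) = 2 * a + b * trace A + c * trace B + d * trace (A ** B)"
  unfolding span_comb_def by (simp add: mat2_entrywise algebra_simps)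

lemma adjugate2_mult: "adjugate2 A ** X = mat (trace A) ** X - (A :: mat2) ** X"
  by (simp add: mat2_entrywise adjugate2_def algebra_simps)

context
  fixes A B A' B' :: mat2
  assumes det: "det A = 1" "det B = 1" "det A' = 1" "det B' = 1"
    and traces: "trace A = trace A'" "trace B = trace B'" "trace (A ** B) = trace (A' ** B')"
begin

lemma same_span_comb_one: "same_span_comb A B A' B' (mat 1) (mat 1)"
  unfolding same_span_comb_def span_comb_def
  by (rule exI[of _ 1], rule exI[of _ 0], rule exI[of _ 0], rule exI[of _ 0]) (simp add: mat2_entrywise)

lemma same_span_comb_mult_left:
  "same_span_comb A B A' B' X X' \<Longrightarrow> same_span_comb A B A' B' (A ** X) (A' ** X')"
  unfolding same_span_comb_def using sl2_mult_span_comb_left det traces by metis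

lemma same_span_comb_mult_right:
  "same_span_comb A B A' B' X X' \<Longrightarrow> same_span_comb A B A' B' (B ** X) (B' ** X')"
  unfolding same_span_comb_def using sl2_mult_span_comb_right det traces by metis

lemma same_span_comb_mat_mult:
  "same_span_comb A B A' B' X X' \<Longrightarrow> same_span_comb A B A' B' (mat s ** X) (mat s ** X')"
  unfolding same_span_comb_def using mat_mult_span_comb by metis

lemma same_span_comb_diff:
  "same_span_comb A B A' B' X X' \<Longrightarrow> same_span_comb A B A' B' Y Y' \<Longrightarrow>
    same_span_comb A B A' B' (X - Y) (X' - Y')"
  unfolding same_span_comb_def using span_comb_diff by metis

lemma same_span_comb_adjugate2_left:
  "same_span_comb A B A' B' X X' \<Longrightarrow> same_span_comb A B A' B' (adjugate2 A ** X) (adjugate2 A' ** X')"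
  unfolding adjugate2_mult
  using same_span_comb_diff same_span_comb_mat_mult same_span_comb_mult_left traces by metis

lemma same_span_comb_adjugate2_right:
  "same_span_comb A B A' B' X X' \<Longrightarrow> same_span_comb A B A' B' (adjugate2 B ** X) (adjugate2 B' ** X')"
  unfolding adjugate2_mult
  using same_span_comb_diff same_span_comb_mat_mult same_span_comb_mult_right traces by metis

lemma same_span_comb_trace: "same_span_comb A B A' B' X X' \<Longrightarrow> trace X = trace X'"
  unfolding same_span_comb_def using trace_span_comb traces by metis

end

lemma character_eqI:
  assumes rep: "is_rep p q \<rho>" "is_rep p q \<rho>'" and H: "\<rho> H = mat e" "\<rho>' H = mat e"
    and traces: "trace (\<rho> C1) = trace (\<rho>' C1)" "trace (\<rho> C2) = trace (\<rho>' C2)"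
      "trace (\<rho> C1 ** \<rho> C2) = trace (\<rho>' C1 ** \<rho>' C2)"
  shows "character \<rho> = character \<rho>'"
proof -
  note det = is_repD(1)[OF rep(1)] is_repD(1)[OF rep(2)]
  note ctxt = det(1)[of C1] det(1)[of C2] det(2)[of C1] det(2)[of C2] traces
  have "e * e = 1" using det(1)[of H] H by simp
  have "same_span_comb (\<rho> C1) (\<rho> C2) (\<rho>' C1) (\<rho>' C2) (eval_word \<rho> w) (eval_word \<rho>' w)" for w
  proof (induction w)
    case Nil
    show ?case using same_span_comb_one[OF ctxt] by simp
  next
    case (Cons gb w)
    obtain g b where gb: "gb = (g, b)" by fastforce
    show ?case
      using Cons \<open>e * e = 1\<close> is_rep_C3[OF rep(1)] is_rep_C3[OF rep(2)]
      unfolding gb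
      by (cases g; cases b)
        (simp_all add: same_span_comb_mult_left[OF ctxt] same_span_comb_mult_right[OF ctxt]
          same_span_comb_adjugate2_left[OF ctxt] same_span_comb_adjugate2_right[OF ctxt]
          same_span_comb_mat_mult[OF ctxt] matrix_inv_sl2 det H
          matrix_mul_assoc[symmetric])
  qed
  then show ?thesis
    unfolding character_def using same_span_comb_trace[OF ctxt] by blast
qed

section \<open>Common eigenvectors and irreducibility\<close>

lemma nonzero_vec2_iff: "(v :: complex^2) \<noteq> 0 \<longleftrightarrow> v $ 1 \<noteq> 0 \<or> v $ 2 \<noteq> 0"
  by (simp add: vec_eq_iff forall_2)

lemma sl2_eigenvalue_root:
  assumes "det (A :: mat2) = 1" "A *v v = a *s v" "v \<noteq> 0"
  shows "a\<^sup>2 - trace A * a + 1 = 0"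
proof -
  have eq: "A$1$1 * v$1 + A$1$2 * v$2 = a * v$1" "A$2$1 * v$1 + A$2$2 * v$2 = a * v$2"
    using assms(2) by (simp_all add: mat2_entrywise)
  have det: "A$1$1 * A$2$2 - A$1$2 * A$2$1 = 1"
    using assms(1) by (simp add: det_2)
  have "(a\<^sup>2 - trace A * a + 1) * v$1 = 0" "(a\<^sup>2 - trace A * a + 1) * v$2 = 0"
    using eq det unfolding trace_def sum_2 by algebra+
  then show ?thesis
    using assms(3) nonzero_vec2_iff by auto
qed

lemma sl2_trace_eigenvalue:
  assumes "det (A :: mat2) = 1" "A *v v = a *s v" "v \<noteq> 0"
  shows "a \<noteq> 0" "trace A = a + 1 / a"
proof -
  have root: "a\<^sup>2 - trace A * a + 1 = 0"
    by (rule sl2_eigenvalue_root[OF assms])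
  then show "a \<noteq> 0" by auto
  with root show "trace A = a + 1 / a"
    by (simp add: field_simps power2_eq_square)
qed

lemma exists_root_sl2_char_poly: "\<exists>a :: complex. a\<^sup>2 - t * a + 1 = 0"
proof -
  define s where "s = csqrt (t\<^sup>2 - 4)"
  have "s\<^sup>2 = t\<^sup>2 - 4" unfolding s_def by simp
  then have "((t + s) / 2)\<^sup>2 - t * ((t + s) / 2) + 1 = 0"
    by (simp add: field_simps power2_eq_square; algebra)
  then show ?thesis by blast
qed

lemma sl2_characteristic_factors:
  assumes "det (A :: mat2) = 1" "a\<^sup>2 - trace A * a + 1 = 0"
  shows "A ** (A - mat (trace A - a)) = mat a ** (A - mat (trace A - a))"
    "A ** (A - mat a) = mat (trace A - a) ** (A - mat a)"
    "(A - mat (trace A - a)) ** (A - mat a) = 0"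
    "(A - mat a) ** (A - mat (trace A - a)) = 0"
  using assms by (simp_all add: mat2_entrywise algebra_simps power2_eq_square; algebra)+

lemma eigenvector_in_column:
  assumes "(A :: mat2) ** P = mat a ** (P :: mat2)" "P \<noteq> 0"
  obtains j where "P *v axis j 1 \<noteq> 0" "A *v (P *v axis j 1) = a *s (P *v axis j 1)"
proof -
  have "P *v axis 1 1 \<noteq> 0 \<or> P *v axis 2 1 \<noteq> 0"
    using assms(2) by (auto simp: mat2_entrywise axis_def)
  moreover have "A *v (P *v x) = a *s (P *v x)" for x
    by (metis assms(1) mat_vector_mult matrix_vector_mul_assoc)
  ultimately show ?thesis using that by blast
qed

lemma sl2_has_eigenvector:
  assumes "det (A :: mat2) = 1"
  obtains v a where "v \<noteq> 0" "A *v v = a *s v"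
proof -
  obtain a where a: "a\<^sup>2 - trace A * a + 1 = 0"
    using exists_root_sl2_char_poly by blast
  show ?thesis
  proof (cases "A = mat (trace A - a)")
    case True
    then show ?thesis
      using that[of "axis 1 1"] by (metis axis_eq_0_iff mat_vector_mult zero_neq_one)
  next
    case False
    then show ?thesis
      using eigenvector_in_column[OF sl2_characteristic_factors(1)[OF assms a]] that by auto
  qed
qed

lemma kernel_collinear:
  assumes "(M :: mat2) \<noteq> 0" "M *v u = 0" "M *v w = 0" "u \<noteq> 0"
  shows "\<exists>c. w = c *s u"
proof -
  have eq: "M$1$1 * u$1 + M$1$2 * u$2 = 0" "M$2$1 * u$1 + M$2$2 * u$2 = 0"
    "M$1$1 * w$1 + M$1$2 * w$2 = 0" "M$2$1 * w$1 + M$2$2 * w$2 = 0"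
    using assms(2,3) by (simp_all add: mat2_entrywise)
  have "M$1$1 * (u$1 * w$2 - u$2 * w$1) = 0" "M$1$2 * (u$1 * w$2 - u$2 * w$1) = 0"
    "M$2$1 * (u$1 * w$2 - u$2 * w$1) = 0" "M$2$2 * (u$1 * w$2 - u$2 * w$1) = 0"
    using eq by algebra+
  moreover have "M$1$1 \<noteq> 0 \<or> M$1$2 \<noteq> 0 \<or> M$2$1 \<noteq> 0 \<or> M$2$2 \<noteq> 0"
    using assms(1) by (auto simp: vec_eq_iff forall_2)
  ultimately have cross: "u$1 * w$2 = u$2 * w$1"
    by auto
  show ?thesis
  proof (cases "u$1 = 0")
    case False
    then have "w = (w$1 / u$1) *s u" using cross by (simp add: vec_eq_iff forall_2 field_simps)
    then show ?thesis by blast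
  next
    case True
    then have "u$2 \<noteq> 0" using assms(4) nonzero_vec2_iff by blast
    then have "w = (w$2 / u$2) *s u" using True cross by (simp add: vec_eq_iff forall_2 field_simps)
    then show ?thesis by blast
  qed
qed

text \<open>By Fricke's trace identity, \<open>kappa (trace A) (trace B) (trace (A ** B))\<close> equals
  \<open>trace (A B A\<inverse> B\<inverse>) - 2\<close> for \<open>A, B \<in> SL\<^sub>2(\<complex>)\<close>.\<close>
definition kappa :: "complex \<Rightarrow> complex \<Rightarrow> complex \<Rightarrow> complex" where
  "kappa x y z = x\<^sup>2 + y\<^sup>2 + z\<^sup>2 - x * y * z - 4"

lemma kappa_eq_0_if_common_eigenvector:
  assumes "det (A :: mat2) = 1" "det B = 1" "v \<noteq> 0" "A *v v = a *s v" "B *v v = b *s v"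
  shows "kappa (trace A) (trace B) (trace (A ** B)) = 0"
proof -
  have "(A ** B) *v v = (a * b) *s v"
    by (simp add: matrix_vector_mul_assoc[symmetric] assms(4,5) matrix_vector_mult_smult mult.commute)
  moreover have "det (A ** B) = 1"
    using assms by (simp add: det_mul)
  ultimately have AB: "trace (A ** B) = a * b + 1 / (a * b)"
    using sl2_trace_eigenvalue assms(3) by blast
  have "a \<noteq> 0" "b \<noteq> 0" and A: "trace A = a + 1 / a" and B: "trace B = b + 1 / b"
    using sl2_trace_eigenvalue assms by blast+
  then show ?thesis
    unfolding kappa_def AB A B by (simp add: field_simps power2_eq_square)
qed

lemma sl2_kappa_sandwich:
  assumes "det (A :: mat2) = 1" "det (B :: mat2) = 1" "a\<^sup>2 - trace A * a + 1 = 0"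
  shows "(A - mat (trace A - a)) ** B ** (A - mat a) ** B ** (A - mat (trace A - a)) =
    mat (kappa (trace A) (trace B) (trace (A ** B))) ** (A - mat (trace A - a))"
  using assms unfolding kappa_def by (simp add: mat2_entrywise algebra_simps power2_eq_square; algebra)

lemma common_eigenvector_if_kappa_eq_0:
  assumes detA: "det (A :: mat2) = 1" and detB: "det B = 1"
    and kappa: "kappa (trace A) (trace B) (trace (A ** B)) = 0"
  shows "\<exists>v. v \<noteq> 0 \<and> (\<exists>a. A *v v = a *s v) \<and> (\<exists>b. B *v v = b *s v)"
proof -
  obtain a where a: "a\<^sup>2 - trace A * a + 1 = 0"
    using exists_root_sl2_char_poly by blast
  define P where "P = A - mat (trace A - a)"
  define Q where "Q = A - mat a"
  note factors = sl2_characteristic_factors[OF detA a, folded P_def Q_def]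
  have sandwich: "P ** B ** Q ** B ** P = 0"
    using sl2_kappa_sandwich[OF detA detB a, folded P_def Q_def] kappa by (simp add: mat2_entrywise)
  show ?thesis
  proof (cases "P = 0 \<or> Q = 0")
    case True
    then obtain c where "A = mat c"
      unfolding P_def Q_def by auto
    moreover obtain v b where "v \<noteq> 0" "B *v v = b *s v"
      using sl2_has_eigenvector[OF detB] by blast
    ultimately show ?thesis
      using mat_vector_mult by metis
  next
    case False
    then obtain j where u: "P *v axis j 1 \<noteq> 0" "A *v (P *v axis j 1) = a *s (P *v axis j 1)"
      using eigenvector_in_column[OF factors(1)] by blast
    define u where "u = P *v axis j 1"
    have Qu: "Q *v u = 0"
      unfolding u_def by (simp add: matrix_vector_mul_assoc factors(4))
    define w where "w = Q *v (B *v u)"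
    show ?thesis
    proof (cases "w = 0")
      case True
      then have "\<exists>b. B *v u = b *s u"
        using kernel_collinear[of Q u "B *v u"] False Qu u(1) unfolding u_def w_def by blast
      then show ?thesis
        using u unfolding u_def by blast
    next
      case w: False
      text \<open>Then \<open>w\<close> is an eigenvector of \<open>A\<close> in the kernel of \<open>P\<close>, and the sandwich
        identity puts \<open>B w\<close> into that kernel as well.\<close>
      have "A *v w = (A ** Q) *v (B *v u)"
        unfolding w_def by (simp add: matrix_vector_mul_assoc matrix_mul_assoc)
      also have "\<dots> = (trace A - a) *s w"
        unfolding factors(2) w_def by (simp add: matrix_vector_mul_assoc[symmetric] mat_vector_mult)
      finally have "A *v w = (trace A - a) *s w" .
      moreover have "P *v w = 0"
        unfolding w_def matrix_vector_mul_assoc[of P Q] factors(3) by (simp add: mat2_entrywise)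
      moreover have "P *v (B *v w) = (P ** B ** Q ** B ** P) *v axis j 1"
        unfolding w_def u_def by (simp add: matrix_vector_mul_assoc matrix_mul_assoc)
      then have "P *v (B *v w) = 0"
        unfolding sandwich by simp
      ultimately show ?thesis
        using kernel_collinear[of P w "B *v w"] False w by blast
    qed
  qed
qed

lemma common_eigenvector_iff_kappa_eq_0:
  assumes "det (A :: mat2) = 1" "det B = 1"
  shows "(\<exists>v. v \<noteq> 0 \<and> (\<exists>a. A *v v = a *s v) \<and> (\<exists>b. B *v v = b *s v)) \<longleftrightarrow>
    kappa (trace A) (trace B) (trace (A ** B)) = 0"
  using kappa_eq_0_if_common_eigenvector[OF assms] common_eigenvector_if_kappa_eq_0[OF assms]
  by blast

lemma is_rep_commute_H: "is_rep p q \<rho> \<Longrightarrow> \<rho> g ** \<rho> H = \<rho> H ** \<rho> g"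
  using is_repD(3)[of p q \<rho> 1] is_repD(3)[of p q \<rho> 2] is_repD(3)[of p q \<rho> 3]
  by (cases g) simp_all

lemma commute_diff_mat:
  assumes "(X :: mat2) ** Y = Y ** X"
  shows "(Y - mat c) ** X = X ** (Y - mat c)"
proof -
  have "(Y - mat c) ** X = Y ** X - mat c ** X" "X ** (Y - mat c) = X ** Y - X ** mat c"
    "mat c ** X = X ** mat c"
    by (simp_all add: mat2_entrywise algebra_simps)
  then show ?thesis
    using assms by simp
qed

lemma irreducible_rep_H_scalar:
  assumes rep: "is_rep p q \<rho>" and irr: "irreducible_rep \<rho>"
  obtains e where "\<rho> H = mat e" "e = 1 \<or> e = -1"
proof -
  obtain v \<mu> where v: "v \<noteq> 0" "\<rho> H *v v = \<mu> *s v"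
    using sl2_has_eigenvector[OF is_repD(1)[OF rep]] by blast
  define N where "N = \<rho> H - mat \<mu>"
  have Nv: "N *v v = 0"
    using v(2) unfolding N_def by (simp add: mat2_entrywise algebra_simps)
  have "N ** \<rho> g = \<rho> g ** N" for g
    unfolding N_def using commute_diff_mat is_rep_commute_H[OF rep] by blast
  then have "N *v (\<rho> g *v v) = \<rho> g *v (N *v v)" for g
    by (simp add: matrix_vector_mul_assoc)
  then have "N *v (\<rho> g *v v) = 0" for g
    by (simp add: Nv)
  have "N = 0"
  proof (rule ccontr)
    assume "N \<noteq> 0"
    then have "\<exists>c. \<rho> g *v v = c *s v" for g
      using kernel_collinear Nv \<open>N *v (\<rho> g *v v) = 0\<close> v(1) by blast
    then show False
      using irr v(1) unfolding irreducible_rep_def by blast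
  qed
  then have H: "\<rho> H = mat \<mu>"
    unfolding N_def by simp
  then have "\<mu> * \<mu> = 1"
    using is_repD(1)[OF rep, of H] by simp
  then show ?thesis
    using that H square_eq_1_iff_complex by blast
qed

lemma irreducible_rep_iff_kappa:
  assumes rep: "is_rep p q \<rho>" and H: "\<rho> H = mat e"
  shows "irreducible_rep \<rho> \<longleftrightarrow> kappa (trace (\<rho> C1)) (trace (\<rho> C2)) (trace (\<rho> C1 ** \<rho> C2)) \<noteq> 0"
proof -
  note det = is_repD(1)[OF rep]
  have "\<not> irreducible_rep \<rho> \<longleftrightarrow>
      (\<exists>v. v \<noteq> 0 \<and> (\<exists>a. \<rho> C1 *v v = a *s v) \<and> (\<exists>b. \<rho> C2 *v v = b *s v))"
  proof
    assume "\<exists>v. v \<noteq> 0 \<and> (\<exists>a. \<rho> C1 *v v = a *s v) \<and> (\<exists>b. \<rho> C2 *v v = b *s v)"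
    then obtain v a b where v: "v \<noteq> 0" "\<rho> C1 *v v = a *s v" "\<rho> C2 *v v = b *s v"
      by blast
    text \<open>\<open>v\<close> is an eigenvector of every generator: \<open>\<rho> C3\<close> is a product of adjugates, and
      \<open>\<rho> H\<close> is scalar.\<close>
    have "\<rho> C3 *v v = adjugate2 (\<rho> C2) *v (adjugate2 (\<rho> C1) *v v)"
      by (simp add: is_rep_C3(1)[OF rep] matrix_vector_mul_assoc)
    also have "\<dots> = ((trace (\<rho> C1) - a) * (trace (\<rho> C2) - b)) *s v"
      by (simp only: adjugate2_eigenvector[OF v(2)] adjugate2_eigenvector[OF v(3)]
          matrix_vector_mult_smult vector_smult_assoc)
    finally have "\<rho> C3 *v v = ((trace (\<rho> C1) - a) * (trace (\<rho> C2) - b)) *s v" .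
    moreover have "\<rho> H *v v = e *s v"
      by (simp add: H mat_vector_mult)
    ultimately have "\<exists>c. \<rho> g *v v = c *s v" for g
      using v by (cases g) blast+
    then show "\<not> irreducible_rep \<rho>"
      using v(1) unfolding irreducible_rep_def by blast
  qed (auto simp: irreducible_rep_def)
  then show ?thesis
    using common_eigenvector_iff_kappa_eq_0[OF det det] by blast
qed

section \<open>Powers\<close>

lemma mat_mult_mat_mult: "mat a ** (mat b ** X) = mat (a * b) ** (X :: mat2)"
  by (simp add: matrix_mul_assoc mat_mult_mat)

lemma mpow_nat_mat: "mpow_nat (mat a) n = mat (a ^ n)"
  by (induction n) (simp_all add: mat_mult_mat)

lemma mpow_nat_eigenvector: "A *v v = l *s v \<Longrightarrow> mpow_nat A n *v v = (l ^ n) *s v"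
proof (induction n)
  case (Suc n)
  have "mpow_nat A (Suc n) *v v = A *v (mpow_nat A n *v v)"
    by (simp add: matrix_vector_mul_assoc)
  also have "\<dots> = (l ^ Suc n) *s v"
    using Suc by (simp add: matrix_vector_mult_smult vector_smult_assoc mult.commute)
  finally show ?case .
qed simp

text \<open>For \<open>e = \<plusminus>1\<close> this is \<open>e\<^sup>k\<close>, \<open>k \<in> \<int>\<close>.\<close>
definition sign_power :: "complex \<Rightarrow> int \<Rightarrow> complex" where
  "sign_power e k = (if even k then 1 else e)"

lemma sign_power_square: "e = 1 \<or> e = -1 \<Longrightarrow> sign_power e k * sign_power e k = 1"
  by (auto simp: sign_power_def)

lemma mpow_int_sign_mat:
  assumes "e = 1 \<or> e = -1"
  shows "mpow_int (mat e) k = mat (sign_power e k)"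
proof -
  have "e ^ n = (if even n then 1 else e)" for n
    using assms by (induction n) auto
  moreover have "matrix_inv (mat e :: mat2) = mat e"
    using assms by (auto intro: matrix_inv_eqI simp: mat_mult_mat)
  ultimately show ?thesis
    unfolding mpow_int_def sign_power_def by (simp add: mpow_nat_mat even_nat_iff)
qed

text \<open>This is \<open>A\<^sup>k = l\<^sup>k P + m\<^sup>k Q\<close> for the spectral projections \<open>P = (A - m) / (l - m)\<close> and
  \<open>Q = (A - l) / (m - l)\<close> of the distinct eigenvalues \<open>l\<close>, \<open>m\<close>.\<close>
lemma sl2_power_formula:
  assumes det: "det (A :: mat2) = 1" and trace: "trace A = l + m" and "l * m = 1" "l \<noteq> m"
  shows "mpow_nat A k = mat (l ^ k / (l - m)) ** (A - mat m) - mat (m ^ k / (l - m)) ** (A - mat l)"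
proof (induction k)
  case 0
  show ?case
    using assms(4) by (simp add: mat2_entrywise field_simps)
next
  case (Suc k)
  have root: "l\<^sup>2 - trace A * l + 1 = 0" and "trace A - l = m"
    using trace assms(3) by (simp_all add: algebra_simps power2_eq_square)
  note factors = sl2_characteristic_factors(1,2)[OF det root, unfolded this]
  have distrib: "A ** (mat \<alpha> ** P - mat \<beta> ** Q) = mat \<alpha> ** (A ** P) - mat \<beta> ** (A ** Q)"
    for \<alpha> \<beta> P Q
    by (simp add: mat2_entrywise algebra_simps)
  have "mpow_nat A (Suc k) = A ** (mat (l ^ k / (l - m)) ** (A - mat m) - mat (m ^ k / (l - m)) ** (A - mat l))"
    using Suc by simp
  also have "\<dots> = mat (l ^ Suc k / (l - m)) ** (A - mat m) - mat (m ^ Suc k / (l - m)) ** (A - mat l)"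
    unfolding distrib factors by (simp add: mat_mult_mat_mult mult.commute)
  finally show ?case .
qed

lemma sl2_power_eq_mat:
  assumes "det (A :: mat2) = 1" "trace A = l + m" "l * m = 1" "l \<noteq> m" "l ^ n = s" "m ^ n = s"
  shows "mpow_nat A n = mat s"
  unfolding sl2_power_formula[OF assms(1-4)] assms(5,6)
  using assms(4) by (simp add: mat2_entrywise field_simps)

lemma unipotent_power:
  assumes "N ** N = (0 :: mat2)" "l * l = 1"
  shows "mpow_nat (mat l + N) n = mat (l ^ n) + mat (of_nat n * l ^ n * l) ** N"
proof (induction n)
  case (Suc n)
  have "(mat l + N) ** (mat a + mat b ** N) = mat (l * a) + mat (l * b + a) ** N + mat b ** (N ** N)"
    for a b
    by (simp add: mat2_entrywise algebra_simps)
  moreover have "l * (of_nat n * l ^ n * l) + l ^ n = of_nat (Suc n) * l ^ Suc n * l"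
    using assms(2) by (simp add: algebra_simps)
  ultimately show ?case
    using Suc assms(1) by (simp add: mat2_entrywise)
qed (simp add: mat2_entrywise)

lemma sl2_power_eq_mat_eigenvalue:
  assumes det: "det (A :: mat2) = 1" and "n \<ge> 1" and power: "mpow_nat A n = mat s"
    and "A \<noteq> mat 1" "A \<noteq> mat (-1)"
  obtains l where "l ^ n = s" "l * l \<noteq> 1" "trace A = l + 1 / l"
proof -
  obtain v l where v: "v \<noteq> 0" "A *v v = l *s v"
    using sl2_has_eigenvector[OF det] by blast
  have "mat s *v v = (l ^ n) *s v"
    using mpow_nat_eigenvector[OF v(2), of n] power by simp
  then have "l ^ n = s"
    using v(1) by (simp add: mat_vector_mult)
  moreover have "l * l \<noteq> 1"
  proof
    assume l: "l * l = 1"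
    define N where "N = A - mat l"
    text \<open>\<open>A\<close> has the double eigenvalue \<open>l\<close>, so \<open>N\<close> is nilpotent and \<open>A\<^sup>n\<close> scalar forces \<open>N = 0\<close>.\<close>
    have "N ** N = 0"
      using det sl2_eigenvalue_root[OF det v(2,1)] l unfolding N_def
      by (simp add: mat2_entrywise algebra_simps power2_eq_square; algebra)
    then have "mat (of_nat n * l ^ n * l) ** N = 0"
      using unipotent_power[OF _ l, of N n] power \<open>l ^ n = s\<close> unfolding N_def
      by (simp add: mat2_entrywise)
    moreover have "of_nat n * l ^ n * l \<noteq> 0"
      using \<open>n \<ge> 1\<close> l by auto
    ultimately have "A = mat l"
      unfolding N_def by (simp add: mat2_entrywise vec_eq_iff[symmetric])
    then show False
      using assms(4,5) l square_eq_1_iff_complex by auto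
  qed
  moreover have "trace A = l + 1 / l"
    using sl2_trace_eigenvalue[OF det v(2,1)] by blast
  ultimately show ?thesis
    using that by blast
qed

section \<open>Counting traces\<close>

text \<open>The traces of the non-central \<open>A \<in> SL\<^sub>2(\<complex>)\<close> with \<open>A\<^sup>n = s\<close>.\<close>
definition root_traces :: "nat \<Rightarrow> complex \<Rightarrow> complex set" where
  "root_traces n s = (\<lambda>l. l + 1 / l) ` {l. l ^ n = s \<and> l * l \<noteq> 1}"

lemma root_ne_0: "n \<ge> 1 \<Longrightarrow> s \<noteq> 0 \<Longrightarrow> (l :: complex) ^ n = s \<Longrightarrow> l \<noteq> 0"
  by (auto simp: power_0_left)

lemma sl2_power_eq_mat_if_root_trace:
  assumes "det (A :: mat2) = 1" "trace A \<in> root_traces n s" "n \<ge> 1" "s * s = 1"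
  shows "mpow_nat A n = mat s"
proof -
  obtain l where l: "l ^ n = s" "l * l \<noteq> 1" "trace A = l + 1 / l"
    using assms(2) unfolding root_traces_def by blast
  have "s \<noteq> 0"
    using assms(4) by auto
  then have "l \<noteq> 0"
    using root_ne_0 assms(3) l(1) by blast
  then have "l * (1 / l) = 1" "l \<noteq> 1 / l" "(1 / l) ^ n = s"
    using l(1,2) assms(4) by (simp_all add: field_simps power_one_over divide_eq_eq)
  then show ?thesis
    using sl2_power_eq_mat[OF assms(1) l(3)] l(1) by blast
qed

lemma root_trace_ne_2:
  assumes "x \<in> root_traces n s" "n \<ge> 1" "s \<noteq> 0"
  shows "x \<noteq> 2" "x \<noteq> -2"
proof -
  obtain l where l: "l ^ n = s" "l * l \<noteq> 1" "x = l + 1 / l"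
    using assms(1) unfolding root_traces_def by blast
  have "l \<noteq> 0"
    using root_ne_0 assms(2,3) l(1) by blast
  then have "x - 2 = (l - 1)\<^sup>2 / l" "x + 2 = (l + 1)\<^sup>2 / l"
    unfolding l(3) by (simp_all add: field_simps power2_eq_square)
  moreover have "l - 1 \<noteq> 0" "l + 1 \<noteq> 0"
    using l(2) by (auto simp: add_eq_0_iff2)
  ultimately have "x - 2 \<noteq> 0" "x + 2 \<noteq> 0"
    using \<open>l \<noteq> 0\<close> by simp_all
  then show "x \<noteq> 2" "x \<noteq> -2"
    by (simp_all add: add_eq_0_iff2)
qed

lemma plus_inverse_eq_iff:
  assumes "(l :: complex) \<noteq> 0" "m \<noteq> 0"
  shows "l + 1 / l = m + 1 / m \<longleftrightarrow> m = l \<or> m = 1 / l"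
proof -
  have "l + 1 / l - (m + 1 / m) = (l - m) * (l * m - 1) / (l * m)"
    using assms by (simp add: field_simps)
  then have "l + 1 / l = m + 1 / m \<longleftrightarrow> l = m \<or> l * m = 1"
    using assms by auto
  then show ?thesis
    using assms by (auto simp: field_simps)
qed

text \<open>The map \<open>l \<mapsto> l + 1/l\<close> is two-to-one on these roots: it identifies \<open>l\<close> with \<open>1/l \<noteq> l\<close>.\<close>
lemma card_roots_eq_twice_card_root_traces:
  assumes "n \<ge> 1" "s * s = 1"
  shows "finite (root_traces n s)" "card {l. l ^ n = s \<and> l * l \<noteq> 1} = 2 * card (root_traces n s)"
proof -
  define R where "R = {l :: complex. l ^ n = s \<and> l * l \<noteq> 1}"
  define f where "f = (\<lambda>l :: complex. l + 1 / l)"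
  have "finite R"
    unfolding R_def using finite_nth_roots[of n s] assms(1) by (auto intro: finite_subset)
  moreover have traces: "root_traces n s = f ` R"
    unfolding root_traces_def R_def f_def ..
  ultimately show "finite (root_traces n s)"
    by (simp only: finite_imageI)
  have "s \<noteq> 0" "1 / s = s"
    using assms(2) by (auto simp: divide_eq_eq)
  then have nonzero: "l \<in> R \<Longrightarrow> l \<noteq> 0" for l
    unfolding R_def using root_ne_0[OF assms(1)] by blast
  have inverse: "l \<in> R \<Longrightarrow> 1 / l \<in> R" for l
    using \<open>1 / s = s\<close> unfolding R_def by (simp add: power_one_over divide_eq_eq)
  have fibre: "card {l \<in> R. f l = t} = 2" if t: "t \<in> f ` R" for t
  proof -
    obtain l where l: "l \<in> R" "t = f l"
      using t by blast
    have "x \<in> R \<and> f x = t \<longleftrightarrow> x = l \<or> x = 1 / l" for x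
      using l inverse[OF l(1)] nonzero plus_inverse_eq_iff[OF nonzero[OF l(1)], of x]
      unfolding f_def by auto
    then have "{l \<in> R. f l = t} = {l, 1 / l}"
      by auto
    moreover have "l \<noteq> 1 / l"
      using l nonzero[of l] unfolding R_def by (auto simp: field_simps)
    ultimately show ?thesis by simp
  qed
  have "(\<Sum>l\<in>R. card {t \<in> f ` R. f l = t}) = 2 * card (f ` R)"
    by (rule sum_multicount) (use \<open>finite R\<close> fibre in auto)
  moreover have "{t \<in> f ` R. f l = t} = {f l}" if "l \<in> R" for l
    using that by auto
  ultimately show "card {l. l ^ n = s \<and> l * l \<noteq> 1} = 2 * card (root_traces n s)"
    unfolding traces R_def[symmetric] by simp
qed

lemma card_roots_not_square_1:
  assumes "n \<ge> 1" "s \<noteq> 0"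
  shows "card {l :: complex. l ^ n = s \<and> l * l \<noteq> 1} = n - card {l :: complex. l ^ n = s \<and> l * l = 1}"
proof -
  have "{l :: complex. l ^ n = s \<and> l * l \<noteq> 1} = {l. l ^ n = s} - {l. l ^ n = s \<and> l * l = 1}"
    by auto
  moreover have "finite {l :: complex. l ^ n = s}"
    using finite_nth_roots assms(1) by auto
  ultimately show ?thesis
    using card_nth_roots[OF assms(2)] assms(1) by (simp add: card_Diff_subset finite_subset subset_iff)
qed

lemma card_root_traces_1:
  assumes "n \<ge> 1"
  shows "card (root_traces n 1) = (n - 1) div 2"
proof -
  have "{l :: complex. l ^ n = 1 \<and> l * l = 1} = (if even n then {1, -1} else {1})"
    by (auto simp: square_eq_1_iff_complex)
  then have "card {l :: complex. l ^ n = 1 \<and> l * l = 1} = (if even n then 2 else 1)"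
    by simp
  then have "2 * card (root_traces n 1) = n - (if even n then 2 else 1)"
    using card_roots_eq_twice_card_root_traces(2)[OF assms, of 1] card_roots_not_square_1[OF assms, of 1]
    by simp
  then show ?thesis
    by presburger
qed

lemma card_root_traces_minus_1:
  assumes "n \<ge> 1"
  shows "card (root_traces n (-1)) = n div 2"
proof -
  have "{l :: complex. l ^ n = -1 \<and> l * l = 1} = (if even n then {} else {-1})"
    by (auto simp: square_eq_1_iff_complex)
  then have "card {l :: complex. l ^ n = -1 \<and> l * l = 1} = (if even n then 0 else 1)"
    by simp
  then have "2 * card (root_traces n (-1)) = n - (if even n then 0 else 1)"
    using card_roots_eq_twice_card_root_traces(2)[OF assms, of "-1"]
      card_roots_not_square_1[OF assms, of "-1"]
    by simp
  then show ?thesis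
    by presburger
qed

lemma card_root_traces_sign_power:
  assumes "p \<ge> 1" "coprime p k" "e = 1 \<or> e = -1"
  shows "int (card (root_traces (nat p) (sign_power e k))) =
    (if e = 1 then \<lceil>real_of_int p / 2\<rceil> - 1 else \<lfloor>real_of_int p / 2\<rfloor>)"
proof -
  have floor: "\<lfloor>real_of_int p / 2\<rfloor> = p div 2"
    using floor_divide_of_int_eq[of p 2] by simp
  have "\<lceil>real_of_int p / 2\<rceil> = - \<lfloor>real_of_int (- p) / 2\<rfloor>"
    by (simp add: ceiling_def)
  then have ceiling: "\<lceil>real_of_int p / 2\<rceil> - 1 = (p - 1) div 2"
    using floor_divide_of_int_eq[where 'a = real, of "- p" 2] by simp
  have half: "int ((nat p - 1) div 2) = (p - 1) div 2" "int (nat p div 2) = p div 2"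
    using assms(1) by (simp_all add: zdiv_int of_nat_diff)
  have n: "nat p \<ge> 1"
    using assms(1) by simp
  consider "e = 1" | "e = -1" "odd k" | "e = -1" "even k"
    using assms(3) by blast
  then show ?thesis
  proof cases
    case 1
    then show ?thesis
      using card_root_traces_1[OF n] half(1) ceiling by (simp add: sign_power_def)
  next
    case 2
    then show ?thesis
      using card_root_traces_minus_1[OF n] half(2) floor by (simp add: sign_power_def)
  next
    case 3
    text \<open>The count is \<open>p\<^sup>+\<close> here, which equals \<open>p\<^sup>-\<close> since \<open>p\<close> is odd.\<close>
    have "odd p"
    proof
      assume "even p"
      then have "is_unit (2 :: int)"
        using coprime_common_divisor[OF assms(2)] 3(2) by blast
      then show False
        by simp
    qed
    then have "(p - 1) div 2 = p div 2"
      by (auto elim!: oddE)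
    with 3 show ?thesis
      using card_root_traces_1[OF n] half(1) floor by (simp add: sign_power_def)
  qed
qed

section \<open>Characters and their trace data\<close>

lemma is_rep_power_cgen:
  assumes rep: "is_rep p q \<rho>" and H: "\<rho> H = mat e" "e = 1 \<or> e = -1"
    and i: "i \<in> {1, 2, 3}" and "p i \<ge> 1"
  shows "mpow_nat (\<rho> (cgen i)) (nat (p i)) = mat (sign_power e (q i))"
proof -
  have "mpow_int (\<rho> (cgen i)) (p i) = mpow_nat (\<rho> (cgen i)) (nat (p i))"
    using \<open>p i \<ge> 1\<close> by (simp add: mpow_int_def)
  then have "mpow_nat (\<rho> (cgen i)) (nat (p i)) ** mat (sign_power e (q i)) = mat 1"
    using is_repD(4)[OF rep i] H by (simp add: mpow_int_sign_mat)
  then show ?thesis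
    using eq_mat_if_mult_mat_eq_1 sign_power_square[OF H(2)] by blast
qed

lemma trace_cgen_in_root_traces:
  assumes rep: "is_rep p q \<rho>" and H: "\<rho> H = mat e" "e = 1 \<or> e = -1"
    and i: "i \<in> {1, 2, 3}" and "p i \<ge> 1"
    and noncentral: "\<rho> (cgen i) \<noteq> mat 1" "\<rho> (cgen i) \<noteq> mat (-1)"
  shows "trace (\<rho> (cgen i)) \<in> root_traces (nat (p i)) (sign_power e (q i))"
proof -
  have "nat (p i) \<ge> 1"
    using \<open>p i \<ge> 1\<close> by simp
  then obtain l where "l ^ nat (p i) = sign_power e (q i)" "l * l \<noteq> 1" "trace (\<rho> (cgen i)) = l + 1 / l"
    using sl2_power_eq_mat_eigenvalue[OF is_repD(1)[OF rep] _ is_rep_power_cgen[OF assms(1-5)] noncentral]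
    by blast
  then show ?thesis
    unfolding root_traces_def by blast
qed

lemma is_rep_of_root_traces:
  assumes H: "\<rho> H = mat e" "e = 1 \<or> e = -1"
    and det: "det (\<rho> C1) = 1" "det (\<rho> C2) = 1" "det (\<rho> C3) = 1"
    and product: "\<rho> C1 ** \<rho> C2 ** \<rho> C3 = mat 1" and p: "\<forall>i\<in>{1,2,3::nat}. p i \<ge> 1"
    and traces: "\<And>i. i \<in> {1, 2, 3} \<Longrightarrow> trace (\<rho> (cgen i)) \<in> root_traces (nat (p i)) (sign_power e (q i))"
  shows "is_rep p q \<rho>"
proof -
  have det_all: "det (\<rho> g) = 1" for g
    using det H by (cases g) auto
  have "mpow_int (\<rho> (cgen i)) (p i) ** mpow_int (\<rho> H) (q i) = mat 1" if i: "i \<in> {1, 2, 3}" for i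
  proof -
    have "p i \<ge> 1"
      using p i by blast
    then have "mpow_int (\<rho> (cgen i)) (p i) = mpow_nat (\<rho> (cgen i)) (nat (p i))"
      by (simp add: mpow_int_def)
    also have "\<dots> = mat (sign_power e (q i))"
      using sl2_power_eq_mat_if_root_trace[OF det_all traces[OF i]] \<open>p i \<ge> 1\<close>
        sign_power_square[OF H(2)] by simp
    finally show ?thesis
      using H sign_power_square[OF H(2)] by (simp add: mpow_int_sign_mat mat_mult_mat)
  qed
  moreover have "X ** mat e = mat e ** X" for X :: mat2
    by (simp add: mat2_entrywise algebra_simps)
  ultimately show ?thesis
    unfolding is_rep_def using det_all product H(1) by auto
qed

definition realizes ::
    "(nat \<Rightarrow> int) \<Rightarrow> (nat \<Rightarrow> int) \<Rightarrow> (gen \<Rightarrow> mat2) \<Rightarrow> complex \<Rightarrow> complex \<Rightarrow> complex \<Rightarrow> complex \<Rightarrow> bool"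
  where "realizes p q \<rho> e x y z \<longleftrightarrow>
    is_rep p q \<rho> \<and> \<rho> H = mat e \<and> trace (\<rho> C1) = x \<and> trace (\<rho> C2) = y \<and> trace (\<rho> C1 ** \<rho> C2) = z"

text \<open>Junk on data that no representation realizes; by \<open>realizes_trace_data\<close> this does not
  happen on \<open>trace_data p q\<close>.\<close>
definition char_of_data :: "(nat \<Rightarrow> int) \<Rightarrow> (nat \<Rightarrow> int) \<Rightarrow> complex \<times> complex \<times> complex \<times> complex \<Rightarrow> word \<Rightarrow> complex"
  where "char_of_data p q = (\<lambda>(e, x, y, z). character (SOME \<rho>. realizes p q \<rho> e x y z))"

lemma char_of_data_eq:
  assumes "realizes p q \<rho> e x y z"
  shows "char_of_data p q (e, x, y, z) = character \<rho>"
proof -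
  have "realizes p q (SOME \<rho>. realizes p q \<rho> e x y z) e x y z"
    using assms by (rule someI[of "\<lambda>\<rho>. realizes p q \<rho> e x y z"])
  then show ?thesis
    unfolding char_of_data_def using assms unfolding realizes_def by (auto intro: character_eqI)
qed

lemma character_traces:
  "character \<rho> [(g, True)] = trace (\<rho> g)" "character \<rho> [(g, True), (g', True)] = trace (\<rho> g ** \<rho> g')"
  by (simp_all add: character_def)

text \<open>A character with \<open>\<rho> H = e\<close> and non-central \<open>\<rho> C\<^sub>i\<close> is encoded by \<open>e\<close> and the traces of
  \<open>\<rho> C1\<close>, \<open>\<rho> C2\<close> and \<open>\<rho> C3\<close>; the last one is also the trace of \<open>\<rho> C1 \<rho> C2\<close>.\<close>
definition trace_data :: "(nat \<Rightarrow> int) \<Rightarrow> (nat \<Rightarrow> int) \<Rightarrow> (complex \<times> complex \<times> complex \<times> complex) set"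
  where "trace_data p q = {(e, x, y, z). (e = 1 \<or> e = -1) \<and>
    x \<in> root_traces (nat (p 1)) (sign_power e (q 1)) \<and>
    y \<in> root_traces (nat (p 2)) (sign_power e (q 2)) \<and>
    z \<in> root_traces (nat (p 3)) (sign_power e (q 3))}"

lemma trace_dataD:
  assumes "(e, x, y, z) \<in> trace_data p q"
  shows "e = 1 \<or> e = -1" "x \<in> root_traces (nat (p 1)) (sign_power e (q 1))"
    "y \<in> root_traces (nat (p 2)) (sign_power e (q 2))" "z \<in> root_traces (nat (p 3)) (sign_power e (q 3))"
  using assms unfolding trace_data_def by auto

lemma realizes_trace_data:
  assumes p: "\<forall>i\<in>{1,2,3::nat}. p i \<ge> 1" and d: "(e, x, y, z) \<in> trace_data p q"
  obtains \<rho> where "realizes p q \<rho> e x y z"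
proof -
  note e = trace_dataD(1)[OF d] and traces = trace_dataD(2-4)[OF d]
  obtain l where l: "l ^ nat (p 3) = sign_power e (q 3)" "z = l + 1 / l"
    using traces(3) unfolding root_traces_def by blast
  have "nat (p 3) \<ge> 1" "sign_power e (q 3) \<noteq> 0"
    using p sign_power_square[OF e, of "q 3"] by auto
  then have "l \<noteq> 0"
    using root_ne_0 l(1) by blast
  text \<open>\<open>\<rho> C1 \<rho> C2\<close> has trace \<open>-(u + 1/u)\<close>, so that \<open>u = -l\<close> gives the trace \<open>z\<close>.\<close>
  define u where "u = - l"
  define \<rho> where "\<rho> = (\<lambda>g. case g of
      C1 \<Rightarrow> mat2_of x 1 (-1) 0
    | C2 \<Rightarrow> mat2_of 0 u (- 1 / u) y
    | C3 \<Rightarrow> mat2_of (- u) (- (x * u + y)) 0 (- 1 / u)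
    | H \<Rightarrow> mat e)"
  have "u \<noteq> 0"
    using \<open>l \<noteq> 0\<close> by (simp add: u_def)
  then have "trace (\<rho> C3) = z" "trace (\<rho> C1 ** \<rho> C2) = z"
    unfolding \<rho>_def l(2) u_def by (simp_all add: mat2_entrywise)
  have "is_rep p q \<rho>"
  proof (rule is_rep_of_root_traces[OF _ e _ _ _ _ p])
    show "det (\<rho> C1) = 1" "det (\<rho> C2) = 1" "det (\<rho> C3) = 1" "\<rho> C1 ** \<rho> C2 ** \<rho> C3 = mat 1"
      unfolding \<rho>_def using \<open>u \<noteq> 0\<close> by (simp_all add: mat2_entrywise field_simps)
    show "trace (\<rho> (cgen i)) \<in> root_traces (nat (p i)) (sign_power e (q i))" if "i \<in> {1, 2, 3}" for i
      using that traces \<open>trace (\<rho> C3) = z\<close> unfolding \<rho>_def by (auto simp: mat2_entrywise)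
  qed (simp add: \<rho>_def)
  then have "realizes p q \<rho> e x y z"
    unfolding realizes_def using \<open>trace (\<rho> C1 ** \<rho> C2) = z\<close> by (simp add: \<rho>_def mat2_entrywise)
  then show ?thesis
    using that by blast
qed

lemma inj_on_char_of_data:
  assumes "\<forall>i\<in>{1,2,3::nat}. p i \<ge> 1"
  shows "inj_on (char_of_data p q) (trace_data p q)"
proof (rule inj_onI)
  fix d d' assume d: "d \<in> trace_data p q" "d' \<in> trace_data p q"
    and eq: "char_of_data p q d = char_of_data p q d'"
  obtain e x y z e' x' y' z' where [simp]: "d = (e, x, y, z)" "d' = (e', x', y', z')"
    by (cases d, cases d') auto
  obtain \<rho> \<rho>' where r: "realizes p q \<rho> e x y z" and r': "realizes p q \<rho>' e' x' y' z'"
    using realizes_trace_data[OF assms] d by (metis \<open>d = _\<close> \<open>d' = _\<close>)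
  then have "character \<rho> = character \<rho>'"
    using eq char_of_data_eq by simp
  then have "trace (mat e :: mat2) = trace (mat e' :: mat2)" "x = x'" "y = y'" "z = z'"
    using r r' character_traces unfolding realizes_def by metis+
  then show "d = d'"
    by simp
qed

lemma kappa_eq_0_if_central:
  assumes rep: "is_rep p q \<rho>" and s: "s * s = 1"
    and central: "\<rho> C1 = mat s \<or> \<rho> C2 = mat s \<or> \<rho> C3 = mat s"
  shows "kappa (trace (\<rho> C1)) (trace (\<rho> C2)) (trace (\<rho> C1 ** \<rho> C2)) = 0"
proof -
  have trace_mat_mult: "trace (mat s ** B) = s * trace B" "trace (B ** mat s) = s * trace B" for B :: mat2
    by (simp_all add: mat2_entrywise algebra_simps)
  consider "\<rho> C1 = mat s" | "\<rho> C2 = mat s" | "\<rho> C3 = mat s"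
    using central by blast
  then show ?thesis
  proof cases
    case 1
    then have "trace (\<rho> C1) = 2 * s" "trace (\<rho> C1 ** \<rho> C2) = s * trace (\<rho> C2)"
      by (simp_all add: trace_mat_mult)
    then show ?thesis
      unfolding kappa_def using s by algebra
  next
    case 2
    then have "trace (\<rho> C2) = 2 * s" "trace (\<rho> C1 ** \<rho> C2) = s * trace (\<rho> C1)"
      by (simp_all add: trace_mat_mult)
    then show ?thesis
      unfolding kappa_def using s by algebra
  next
    case 3
    have C12: "\<rho> C1 ** \<rho> C2 = mat s"
      using is_repD(2)[OF rep] 3 eq_mat_if_mult_mat_eq_1 s by simp
    have "\<rho> C2 = adjugate2 (\<rho> C1) ** (\<rho> C1 ** \<rho> C2)"
      by (metis adjugate2_inverse(2) is_repD(1)[OF rep] matrix_mul_assoc matrix_mul_lid)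
    then have "trace (\<rho> C2) = s * trace (\<rho> C1)"
      unfolding C12 by (simp add: trace_mat_mult)
    then show ?thesis
      unfolding C12 kappa_def using s by simp algebra
  qed
qed

lemma trace_data_of_noncentral_rep:
  assumes rep: "is_rep p q \<rho>" and H: "\<rho> H = mat e" "e = 1 \<or> e = -1"
    and p: "\<forall>i\<in>{1,2,3::nat}. p i \<ge> 1"
    and noncentral: "\<forall>i\<in>{1,2,3::nat}. \<rho> (cgen i) \<noteq> mat 1 \<and> \<rho> (cgen i) \<noteq> mat (-1)"
  shows "(e, trace (\<rho> C1), trace (\<rho> C2), trace (\<rho> C1 ** \<rho> C2)) \<in> trace_data p q"
proof -
  have "trace (\<rho> (cgen i)) \<in> root_traces (nat (p i)) (sign_power e (q i))" if "i \<in> {1, 2, 3}" for i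
    using trace_cgen_in_root_traces[OF rep H that] p noncentral that by blast
  then show ?thesis
    unfolding trace_data_def using H(2) trace_is_rep_C3[OF rep] by fastforce
qed

lemma Xirr_eq_image:
  assumes p: "\<forall>i\<in>{1,2,3::nat}. p i \<ge> 1"
  shows "Xirr p q = char_of_data p q ` {d \<in> trace_data p q. case d of (e, x, y, z) \<Rightarrow> kappa x y z \<noteq> 0}"
proof (intro set_eqI iffI)
  fix ch assume "ch \<in> Xirr p q"
  then obtain \<rho> where rep: "is_rep p q \<rho>" and irr: "irreducible_rep \<rho>" and ch: "ch = character \<rho>"
    unfolding Xirr_def by blast
  obtain e where H: "\<rho> H = mat e" "e = 1 \<or> e = -1"
    using irreducible_rep_H_scalar[OF rep irr] by blast
  have kappa: "kappa (trace (\<rho> C1)) (trace (\<rho> C2)) (trace (\<rho> C1 ** \<rho> C2)) \<noteq> 0"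
    using irreducible_rep_iff_kappa[OF rep H(1)] irr by blast
  then have "\<rho> g \<noteq> mat s" if "s * s = 1" "g \<in> {C1, C2, C3}" for s g
    using kappa_eq_0_if_central[OF rep that(1)] that(2) by auto
  then have "\<forall>i\<in>{1,2,3::nat}. \<rho> (cgen i) \<noteq> mat 1 \<and> \<rho> (cgen i) \<noteq> mat (-1)"
    by auto
  then have "(e, trace (\<rho> C1), trace (\<rho> C2), trace (\<rho> C1 ** \<rho> C2)) \<in> trace_data p q"
    using trace_data_of_noncentral_rep[OF rep H p] by blast
  moreover have "realizes p q \<rho> e (trace (\<rho> C1)) (trace (\<rho> C2)) (trace (\<rho> C1 ** \<rho> C2))"
    unfolding realizes_def using rep H by simp
  ultimately show "ch \<in> char_of_data p q ` {d \<in> trace_data p q. case d of (e, x, y, z) \<Rightarrow> kappa x y z \<noteq> 0}"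
    using kappa char_of_data_eq ch by force
next
  fix ch assume "ch \<in> char_of_data p q ` {d \<in> trace_data p q. case d of (e, x, y, z) \<Rightarrow> kappa x y z \<noteq> 0}"
  then obtain e x y z where d: "(e, x, y, z) \<in> trace_data p q" and "kappa x y z \<noteq> 0"
    and ch: "ch = char_of_data p q (e, x, y, z)"
    by auto
  obtain \<rho> where "realizes p q \<rho> e x y z"
    using realizes_trace_data[OF p d] by blast
  then show "ch \<in> Xirr p q"
    unfolding Xirr_def using irreducible_rep_iff_kappa \<open>kappa x y z \<noteq> 0\<close> char_of_data_eq ch
    by (auto simp: realizes_def)
qed

lemma kappa_plus_inverse:
  assumes "(l :: complex) \<noteq> 0" "m \<noteq> 0"
  shows "kappa (l + 1 / l) (m + 1 / m) z = (z - (l * m + 1 / (l * m))) * (z - (l / m + m / l))"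
  unfolding kappa_def using assms
  by (simp add: field_simps) (simp add: algebra_simps power2_eq_square power3_eq_cube)

lemma realizes_diagonal_if_kappa_eq_0:
  assumes p: "\<forall>i\<in>{1,2,3::nat}. p i \<ge> 1" and d: "(e, x, y, z) \<in> trace_data p q"
    and kappa: "kappa x y z = 0"
  obtains \<rho> where "realizes p q \<rho> e x y z" "\<forall>g. diagonal_mat (\<rho> g)"
proof -
  note e = trace_dataD(1)[OF d] and traces = trace_dataD(2-4)[OF d]
  have n: "nat (p i) \<ge> 1" if "i \<in> {1, 2, 3}" for i
    using p that by auto
  have s: "sign_power e k \<noteq> 0" for k
    using sign_power_square[OF e, of k] by auto
  obtain a where a: "a ^ nat (p 1) = sign_power e (q 1)" "x = a + 1 / a"
    using traces(1) unfolding root_traces_def by blast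
  obtain m where m: "m ^ nat (p 2) = sign_power e (q 2)" "y = m + 1 / m"
    using traces(2) unfolding root_traces_def by blast
  have "a \<noteq> 0" "m \<noteq> 0"
    using root_ne_0[OF n s a(1)] root_ne_0[OF n s m(1)] by simp_all
  text \<open>The two roots \<open>z\<close> of \<open>kappa x y z\<close> are the traces of \<open>diag(a, 1/a) diag(b, 1/b)\<close>
    for \<open>b = m\<close> and for \<open>b = 1/m\<close>; both choices of \<open>b\<close> give the trace \<open>y\<close> for the second factor.\<close>
  obtain b where b: "b \<noteq> 0" "y = b + 1 / b" "z = a * b + 1 / (a * b)"
  proof (cases "z = a * m + 1 / (a * m)")
    case True
    then show ?thesis
      using that \<open>m \<noteq> 0\<close> m(2) by blast
  next
    case False
    then have "z = a / m + m / a"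
      using kappa kappa_plus_inverse[OF \<open>a \<noteq> 0\<close> \<open>m \<noteq> 0\<close>, of z] a(2) m(2) by simp
    moreover have "y = 1 / m + 1 / (1 / m)"
      using m(2) by simp
    ultimately show ?thesis
      using that[of "1 / m"] \<open>m \<noteq> 0\<close> \<open>a \<noteq> 0\<close> by (simp add: field_simps)
  qed
  define \<rho> where "\<rho> = (\<lambda>g. case g of
      C1 \<Rightarrow> mat2_of a 0 0 (1 / a)
    | C2 \<Rightarrow> mat2_of b 0 0 (1 / b)
    | C3 \<Rightarrow> mat2_of (1 / (a * b)) 0 0 (a * b)
    | H \<Rightarrow> mat e)"
  have traces_\<rho>: "trace (\<rho> C1) = x" "trace (\<rho> C2) = y" "trace (\<rho> C3) = z" "trace (\<rho> C1 ** \<rho> C2) = z"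
    unfolding \<rho>_def a(2) b(2,3) using \<open>a \<noteq> 0\<close> b(1) by (simp_all add: mat2_entrywise field_simps)
  have "is_rep p q \<rho>"
  proof (rule is_rep_of_root_traces[OF _ e _ _ _ _ p])
    show "det (\<rho> C1) = 1" "det (\<rho> C2) = 1" "det (\<rho> C3) = 1" "\<rho> C1 ** \<rho> C2 ** \<rho> C3 = mat 1"
      unfolding \<rho>_def using \<open>a \<noteq> 0\<close> b(1) by (simp_all add: mat2_entrywise field_simps)
    show "trace (\<rho> (cgen i)) \<in> root_traces (nat (p i)) (sign_power e (q i))" if "i \<in> {1, 2, 3}" for i
      using that traces traces_\<rho> by auto
  qed (simp add: \<rho>_def)
  then have "realizes p q \<rho> e x y z"
    unfolding realizes_def using traces_\<rho> by (simp add: \<rho>_def)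
  moreover have "diagonal_mat (\<rho> g)" for g
    unfolding \<rho>_def diagonal_mat_def by (cases g) (simp_all add: mat2_entrywise)
  ultimately show ?thesis
    using that by blast
qed

lemma exceptional_abelian_chars_eq_image:
  assumes p: "\<forall>i\<in>{1,2,3::nat}. p i \<ge> 1"
  shows "exceptional_abelian_chars p q =
    char_of_data p q ` {d \<in> trace_data p q. case d of (e, x, y, z) \<Rightarrow> kappa x y z = 0}"
proof (intro set_eqI iffI)
  fix ch assume "ch \<in> exceptional_abelian_chars p q"
  then obtain \<rho>\<^sub>0 \<rho> where rep\<^sub>0: "is_rep p q \<rho>\<^sub>0" and diagonal: "\<forall>g. diagonal_mat (\<rho>\<^sub>0 g)"
    and ch\<^sub>0: "ch = character \<rho>\<^sub>0"
    and rep: "is_rep p q \<rho>" and ch: "character \<rho> = ch" and H: "\<rho> H = mat 1 \<or> \<rho> H = - mat 1"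
    and noncentral: "\<forall>i\<in>{1,2,3::nat}. \<rho> (cgen i) \<noteq> mat 1 \<and> \<rho> (cgen i) \<noteq> - mat 1"
    unfolding exceptional_abelian_chars_def abelian_chars_def by blast
  obtain e where H: "\<rho> H = mat e" "e = 1 \<or> e = -1"
    using H uminus_mat_one by metis
  text \<open>The first basis vector is a common eigenvector of the diagonal \<open>\<rho>\<^sub>0\<close>, which has the
    same traces as \<open>\<rho>\<close>.\<close>
  have "\<rho>\<^sub>0 g *v axis 1 1 = (\<rho>\<^sub>0 g $ 1 $ 1) *s axis 1 1" for g
    using diagonal unfolding diagonal_mat_def by (simp add: mat2_entrywise axis_def)
  then have "kappa (trace (\<rho>\<^sub>0 C1)) (trace (\<rho>\<^sub>0 C2)) (trace (\<rho>\<^sub>0 C1 ** \<rho>\<^sub>0 C2)) = 0"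
    using kappa_eq_0_if_common_eigenvector[OF is_repD(1)[OF rep\<^sub>0] is_repD(1)[OF rep\<^sub>0]]
    by (metis axis_eq_0_iff zero_neq_one)
  moreover have "trace (\<rho> C1) = trace (\<rho>\<^sub>0 C1)" "trace (\<rho> C2) = trace (\<rho>\<^sub>0 C2)"
    "trace (\<rho> C1 ** \<rho> C2) = trace (\<rho>\<^sub>0 C1 ** \<rho>\<^sub>0 C2)"
    using ch ch\<^sub>0 character_traces by metis+
  ultimately have "kappa (trace (\<rho> C1)) (trace (\<rho> C2)) (trace (\<rho> C1 ** \<rho> C2)) = 0"
    by simp
  moreover have "(e, trace (\<rho> C1), trace (\<rho> C2), trace (\<rho> C1 ** \<rho> C2)) \<in> trace_data p q"
    using trace_data_of_noncentral_rep[OF rep H p] noncentral by (simp add: uminus_mat_one)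
  moreover have "realizes p q \<rho> e (trace (\<rho> C1)) (trace (\<rho> C2)) (trace (\<rho> C1 ** \<rho> C2))"
    unfolding realizes_def using rep H by simp
  ultimately show "ch \<in> char_of_data p q ` {d \<in> trace_data p q. case d of (e, x, y, z) \<Rightarrow> kappa x y z = 0}"
    using char_of_data_eq ch by force
next
  fix ch assume "ch \<in> char_of_data p q ` {d \<in> trace_data p q. case d of (e, x, y, z) \<Rightarrow> kappa x y z = 0}"
  then obtain e x y z where d: "(e, x, y, z) \<in> trace_data p q" and "kappa x y z = 0"
    and ch: "ch = char_of_data p q (e, x, y, z)"
    by auto
  obtain \<rho> where r: "realizes p q \<rho> e x y z" and diagonal: "\<forall>g. diagonal_mat (\<rho> g)"
    using realizes_diagonal_if_kappa_eq_0[OF p d \<open>kappa x y z = 0\<close>] by blast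
  note e = trace_dataD(1)[OF d] and traces = trace_dataD(2-4)[OF d]
  have rep: "is_rep p q \<rho>" and H: "\<rho> H = mat e"
    and traces_\<rho>: "trace (\<rho> C1) = x" "trace (\<rho> C2) = y" "trace (\<rho> C3) = z"
    using r trace_is_rep_C3[of p q \<rho>] unfolding realizes_def by simp_all
  have "\<rho> (cgen i) \<noteq> mat 1 \<and> \<rho> (cgen i) \<noteq> - mat 1" if i: "i \<in> {1, 2, 3}" for i
  proof -
    have "trace (\<rho> (cgen i)) \<in> root_traces (nat (p i)) (sign_power e (q i))"
      using i traces traces_\<rho> by auto
    moreover have "nat (p i) \<ge> 1"
      using p i by auto
    moreover have "sign_power e (q i) \<noteq> 0"
      using sign_power_square[OF e, of "q i"] by auto
    ultimately have "trace (\<rho> (cgen i)) \<noteq> 2" "trace (\<rho> (cgen i)) \<noteq> -2"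
      using root_trace_ne_2 by blast+
    then show ?thesis
      by (auto simp: uminus_mat_one)
  qed
  then have "\<forall>i\<in>{1,2,3::nat}. \<rho> (cgen i) \<noteq> mat 1 \<and> \<rho> (cgen i) \<noteq> - mat 1"
    by blast
  moreover have "\<rho> H = mat 1 \<or> \<rho> H = - mat 1"
    using H e by (auto simp: uminus_mat_one)
  ultimately show "ch \<in> exceptional_abelian_chars p q"
    unfolding ch char_of_data_eq[OF r] exceptional_abelian_chars_def abelian_chars_def
    using rep diagonal by blast
qed

lemma trace_data_eq_Un:
  "trace_data p q =
    {1} \<times> root_traces (nat (p 1)) (sign_power 1 (q 1)) \<times> root_traces (nat (p 2)) (sign_power 1 (q 2)) \<times>
      root_traces (nat (p 3)) (sign_power 1 (q 3)) \<union>
    {-1} \<times> root_traces (nat (p 1)) (sign_power (-1) (q 1)) \<times> root_traces (nat (p 2)) (sign_power (-1) (q 2)) \<times>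
      root_traces (nat (p 3)) (sign_power (-1) (q 3))"
  by (auto simp: trace_data_def)

lemma card_trace_data:
  assumes "\<forall>i\<in>{1,2,3::nat}. p i \<ge> 1 \<and> coprime (p i) (q i)"
  shows "finite (trace_data p q)"
    "int (card (trace_data p q)) =
      (\<Prod>i\<in>{1,2,3::nat}. \<lceil>real_of_int (p i) / 2\<rceil> - 1) + (\<Prod>i\<in>{1,2,3::nat}. \<lfloor>real_of_int (p i) / 2\<rfloor>)"
proof -
  have finite: "finite (root_traces (nat (p i)) (sign_power e k))" if "i \<in> {1, 2, 3}" "e = 1 \<or> e = -1" for i e k
    using card_roots_eq_twice_card_root_traces(1) that assms sign_power_square by force
  then show "finite (trace_data p q)"
    unfolding trace_data_eq_Un by simp
  have card: "int (card (root_traces (nat (p i)) (sign_power e (q i)))) =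
      (if e = 1 then \<lceil>real_of_int (p i) / 2\<rceil> - 1 else \<lfloor>real_of_int (p i) / 2\<rfloor>)"
    if "i \<in> {1, 2, 3}" "e = 1 \<or> e = -1" for i e
    using card_root_traces_sign_power that assms by blast
  show "int (card (trace_data p q)) =
      (\<Prod>i\<in>{1,2,3::nat}. \<lceil>real_of_int (p i) / 2\<rceil> - 1) + (\<Prod>i\<in>{1,2,3::nat}. \<lfloor>real_of_int (p i) / 2\<rfloor>)"
    unfolding trace_data_eq_Un
    using finite card[of 1 1] card[of 2 1] card[of 3 1] card[of 1 "-1"] card[of 2 "-1"] card[of 3 "-1"]
    by (subst card_Un_disjoint) (auto simp: card_cartesian_product)
qed

lemma card_Xirr_plus_exceptional_eq_card_trace_data:
  assumes p: "\<forall>i\<in>{1,2,3::nat}. p i \<ge> 1" and "finite (trace_data p q)"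
  shows "finite (Xirr p q)" "finite (exceptional_abelian_chars p q)"
    "card (Xirr p q) + card (exceptional_abelian_chars p q) = card (trace_data p q)"
proof -
  define D\<^sub>0 where "D\<^sub>0 = {d \<in> trace_data p q. case d of (e, x, y, z) \<Rightarrow> kappa x y z \<noteq> 0}"
  define D\<^sub>1 where "D\<^sub>1 = {d \<in> trace_data p q. case d of (e, x, y, z) \<Rightarrow> kappa x y z = 0}"
  have Xirr: "Xirr p q = char_of_data p q ` D\<^sub>0"
    unfolding D\<^sub>0_def by (rule Xirr_eq_image[OF p])
  have exceptional: "exceptional_abelian_chars p q = char_of_data p q ` D\<^sub>1"
    unfolding D\<^sub>1_def by (rule exceptional_abelian_chars_eq_image[OF p])
  have sub: "D\<^sub>0 \<subseteq> trace_data p q" "D\<^sub>1 \<subseteq> trace_data p q"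
    and split: "trace_data p q = D\<^sub>0 \<union> D\<^sub>1" "D\<^sub>0 \<inter> D\<^sub>1 = {}"
    unfolding D\<^sub>0_def D\<^sub>1_def by auto
  then have "finite D\<^sub>0" "finite D\<^sub>1"
    using \<open>finite (trace_data p q)\<close> by (auto intro: finite_subset)
  then show "finite (Xirr p q)" "finite (exceptional_abelian_chars p q)"
    unfolding Xirr exceptional by simp_all
  have "card (Xirr p q) = card D\<^sub>0" "card (exceptional_abelian_chars p q) = card D\<^sub>1"
    unfolding Xirr exceptional using inj_on_char_of_data[OF p] sub
    by (auto intro: card_image inj_on_subset)
  then show "card (Xirr p q) + card (exceptional_abelian_chars p q) = card (trace_data p q)"
    using split \<open>finite D\<^sub>0\<close> \<open>finite D\<^sub>1\<close> by (simp add: card_Un_disjoint)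
qed

theorem proposition5p8:
  fixes p q :: "nat \<Rightarrow> int"
  assumes "\<forall>i\<in>{1,2,3::nat}. p i \<ge> 1 \<and> coprime (p i) (q i)"
    and "(\<Sum>i\<in>{1,2,3::nat}. real_of_int (q i) / real_of_int (p i)) \<noteq> 0"
  shows "finite (Xirr p q) \<and> finite (exceptional_abelian_chars p q) \<and>
    int (card (Xirr p q)) =
      (\<Prod>i\<in>{1,2,3::nat}. \<lceil>real_of_int (p i) / 2\<rceil> - 1)
      + (\<Prod>i\<in>{1,2,3::nat}. \<lfloor>real_of_int (p i) / 2\<rfloor>)
      - int (card (exceptional_abelian_chars p q))"
proof -
  have p: "\<forall>i\<in>{1,2,3::nat}. p i \<ge> 1"
    using assms(1) by blast
  note trace_data = card_trace_data[OF assms(1)]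
  note counts = card_Xirr_plus_exceptional_eq_card_trace_data[OF p trace_data(1)]
  show ?thesis
    using counts trace_data(2) by simp
qed

end
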